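(* Let $\Delta>0$ be fixed and let $D_\theta \coloneqq \{\eta + iy \mid \eta > 0,\ |y| \leq \Delta \eta\}$. Let $0 < a \leq 1$. Then \[ \sum_{m \geq 0} E_\times((m+a)z) = -\frac{\log z}{z} - \frac{\psi(a)}{z} + O(1) \] as $z \to 0$ uniformly in $D_\theta$.
   Context: $E_\times(z) \coloneqq \frac{e^{-z}}{1-e^{-z}}$; $\psi=\Gamma'/\Gamma$ is the digamma function; $\log$ is the principal branch. *)

theory Defs
  imports "HOL-Analysis.Analysis" "HOL-Library.Landau_Symbols"
begin

definition E_times :: "complex \<Rightarrow> complex" where
  "E_times z = exp (- z) / (1 - exp (- z))"

definition sector_D :: "real \<Rightarrow> complex set" where
  "sector_D \<Delta> = {z. Re z > 0 \<and> \<bar>Im z\<bar> \<le> \<Delta> * Re z}"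

end

theory Submission
  imports Defs "HOL-Complex_Analysis.Complex_Analysis" "HOL-Real_Asymp.Real_Asymp"
begin

(*
  Write w_m = (m + a) z and split the sum at N ~ 1/|z|.

  Tail: E_times is the derivative of G(w) = Ln (1 - e^(-w)), so by Taylor
  z E(w_m) = G(w_(m+1)) - G(w_m) + O(|z|^2 e^(-Re w_m)).  In the sector Re w_N is bounded
  below, so these errors sum to O(|z|) and the tail telescopes: z * tail = - G(w_N) + O(|z|).

  Head: E(w) = 1/w + Q'(w)/Q(w) for the entire function Q(w) = (1 - e^(-w))/w, which has no
  zeros in |w| < 2 pi.  The terms 1/w_m add up to (psi(a + N) - psi(a))/z.  The terms Q'/Q
  are derivatives of log Q = G - Ln, whose second derivative is bounded on |w| <= 2, so they
  telescope with error O(N |z|^2) = O(|z|) to log Q(w_N) - log Q(w_0).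

  The G(w_N) cancel, log Q(w_0) = O(|w_0|) = O(|z|), Ln w_N = ln (N + a) + Ln z and
  psi(N + a) = ln (N + a) + O(1/N), so z * sum = - Ln z - psi(a) + O(|z|).
*)

definition exp_quot :: "complex \<Rightarrow> complex" where
  "exp_quot v = (if v = 0 then 1 else (1 - exp (- v)) / v)"

lemma exp_quot_tendsto_1: "(exp_quot \<longlongrightarrow> 1) (at 0)"
proof -
  have "((\<lambda>v. 1 - exp (- v)) has_field_derivative 1) (at (0::complex))"
    by (auto intro!: derivative_eq_intros)
  then have "((\<lambda>v. (1 - exp (- v)) / v) \<longlongrightarrow> 1) (at (0::complex))"
    by (simp add: DERIV_def)
  moreover have "\<forall>\<^sub>F v in at 0. (1 - exp (- v)) / v = exp_quot v"
    by (auto simp: eventually_at_filter exp_quot_def)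
  ultimately show ?thesis by (rule Lim_transform_eventually)
qed

lemma exp_quot_holomorphic: "exp_quot holomorphic_on UNIV"
proof (rule no_isolated_singularity'[where K = "{0}"])
  show "(exp_quot \<longlongrightarrow> exp_quot z) (at z within UNIV)" if "z \<in> {0}" for z
    using that exp_quot_tendsto_1 by (simp add: exp_quot_def)
  have "exp_quot holomorphic_on UNIV - {0}
          \<longleftrightarrow> (\<lambda>v. (1 - exp (- v)) / v) holomorphic_on UNIV - {0}"
    by (intro holomorphic_cong) (auto simp: exp_quot_def)
  then show "exp_quot holomorphic_on UNIV - {0}"
    by (auto intro!: holomorphic_intros)
qed auto

lemma exp_quot_nonzero:
  assumes "norm v < 2 * pi"
  shows "exp_quot v \<noteq> 0"
proof
  assume "exp_quot v = 0"
  then have "v \<noteq> 0" "exp (- v) = 1" by (auto simp: exp_quot_def split: if_splits)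
  then obtain n :: int where "Re v = 0" "Im (- v) = 2 * pi * n"
    by (auto simp: exp_eq_1)
  with \<open>v \<noteq> 0\<close> have "n \<noteq> 0" by (auto simp: complex_eq_iff)
  then have "2 * pi * 1 \<le> 2 * pi * \<bar>real_of_int n\<bar>" by (intro mult_left_mono) auto
  also have "\<dots> = \<bar>Im (- v)\<bar>" unfolding \<open>Im (- v) = _\<close> by (simp add: abs_mult)
  also have "\<dots> = \<bar>Im v\<bar>" by simp
  also have "\<dots> \<le> norm v" by (rule abs_Im_le_cmod)
  finally show False using assms by simp
qed

lemma has_field_derivative_exp_quot:
  assumes "v \<noteq> 0"
  shows "(exp_quot has_field_derivative (exp (- v) * v - (1 - exp (- v))) / v\<^sup>2) (at v)"
proof -
  have "((\<lambda>v. (1 - exp (- v)) / v) has_field_derivative (exp (- v) * v - (1 - exp (- v))) / v\<^sup>2) (at v)"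
    using assms by (auto intro!: derivative_eq_intros simp: power2_eq_square)
  then show ?thesis
    by (rule has_field_derivative_transform_within_open[where S = "- {0}"])
       (use assms in \<open>auto simp: exp_quot_def\<close>)
qed

definition exp_quot_logderiv :: "complex \<Rightarrow> complex" where
  "exp_quot_logderiv v = deriv exp_quot v / exp_quot v"

lemma exp_quot_logderiv_holomorphic: "exp_quot_logderiv holomorphic_on ball 0 (2 * pi)"
proof -
  have "deriv exp_quot holomorphic_on UNIV"
    by (rule holomorphic_deriv[OF exp_quot_holomorphic]) auto
  then show ?thesis
    unfolding exp_quot_logderiv_def[abs_def]
    by (intro holomorphic_on_divide holomorphic_on_subset[OF exp_quot_holomorphic]
          holomorphic_on_subset[OF \<open>deriv exp_quot holomorphic_on UNIV\<close>] exp_quot_nonzero) auto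
qed

lemma Re_one_minus_exp_minus_pos:
  assumes "Re w > 0"
  shows "Re (1 - exp (- w)) > 0"
proof -
  have "Re (exp (- w)) \<le> norm (exp (- w))" by (rule complex_Re_le_cmod)
  also have "\<dots> < 1" using assms by simp
  finally show ?thesis by simp
qed

lemma E_times_eq_inverse_plus_logderiv:
  assumes "Re w > 0"
  shows "E_times w = 1 / w + exp_quot_logderiv w"
proof -
  have "w \<noteq> 0" "1 - exp (- w) \<noteq> 0"
    using assms Re_one_minus_exp_minus_pos[OF assms] by auto
  then show ?thesis
    using DERIV_imp_deriv[OF has_field_derivative_exp_quot]
    by (simp add: exp_quot_logderiv_def exp_quot_def E_times_def field_simps power2_eq_square)
qed

lemma Re_pos_not_nonpos_Reals: "Re z > 0 \<Longrightarrow> z \<notin> \<real>\<^sub>\<le>\<^sub>0"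
  by (auto simp: complex_nonpos_Reals_iff)

lemma has_field_derivative_Ln_one_minus_exp:
  assumes "Re w > 0"
  shows "((\<lambda>w. Ln (1 - exp (- w))) has_field_derivative E_times w) (at w)"
proof -
  have "((\<lambda>w. Ln (1 - exp (- w))) has_field_derivative exp (- w) * inverse (1 - exp (- w))) (at w)"
    by (rule derivative_eq_intros refl Re_pos_not_nonpos_Reals Re_one_minus_exp_minus_pos assms
        | simp)+
  then show ?thesis by (simp add: E_times_def field_simps)
qed

lemma has_field_derivative_E_times:
  assumes "Re w > 0"
  shows "(E_times has_field_derivative - exp (- w) / (1 - exp (- w))\<^sup>2) (at w)"
proof -
  have "1 - exp (- w) \<noteq> 0" using Re_one_minus_exp_minus_pos[OF assms] by auto
  then show ?thesis
    unfolding E_times_def[abs_def]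
    by (auto intro!: derivative_eq_intros simp: field_simps power2_eq_square)
qed

definition log_exp_quot :: "complex \<Rightarrow> complex" where
  "log_exp_quot w = Ln (1 - exp (- w)) - Ln w"

lemma has_field_derivative_log_exp_quot:
  assumes "Re w > 0"
  shows "(log_exp_quot has_field_derivative exp_quot_logderiv w) (at w)"
proof -
  have "(log_exp_quot has_field_derivative E_times w - inverse w) (at w)"
    unfolding log_exp_quot_def[abs_def]
    by (rule derivative_eq_intros has_field_derivative_Ln_one_minus_exp refl
        Re_pos_not_nonpos_Reals assms)+
  then show ?thesis
    using E_times_eq_inverse_plus_logderiv[OF assms] by (simp add: divide_inverse)
qed

lemma log_exp_quot_eq_Ln:
  assumes "Re w > 0"
  shows "log_exp_quot w = Ln (exp_quot w)"
proof -
  have pos: "Re (1 - exp (- w)) > 0" "Re (inverse w) > 0"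
    using assms Re_one_minus_exp_minus_pos[OF assms] by (auto simp: sum_power2_gt_zero_iff)
  have "Ln (exp_quot w) = Ln ((1 - exp (- w)) * inverse w)"
    using assms by (auto simp: exp_quot_def divide_inverse)
  also have "\<dots> = Ln (1 - exp (- w)) + Ln (inverse w)"
    using pos Re_Ln_pos_lt_imp[OF pos(1)] Re_Ln_pos_lt_imp[OF pos(2)]
    by (intro Ln_times_simple) auto
  also have "Ln (inverse w) = - Ln w"
    using assms by (intro Ln_inverse Re_pos_not_nonpos_Reals)
  finally show ?thesis by (simp add: log_exp_quot_def)
qed

lemma norm_log_exp_quot_le:
  assumes "Re w > 0" "norm w \<le> r" and M: "\<forall>v\<in>cball 0 r. norm (deriv exp_quot v) \<le> M"
    and "M * norm w < 1/2"
  shows "norm (log_exp_quot w) \<le> 2 * M * norm w"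
proof -
  have "norm (exp_quot w - exp_quot 0) \<le> M * norm (w - 0)"
  proof (rule field_differentiable_bound[OF convex_cball])
    fix x :: complex assume "x \<in> cball 0 r"
    then show "(exp_quot has_field_derivative deriv exp_quot x) (at x within cball 0 r)"
      and "norm (deriv exp_quot x) \<le> M"
      using M by (auto intro: holomorphic_derivI[OF exp_quot_holomorphic])
  qed (use assms order_trans[OF norm_ge_zero assms(2)] in auto)
  then have close: "norm (exp_quot w - 1) \<le> M * norm w" by (simp add: exp_quot_def)
  have "norm (Ln (1 + (exp_quot w - 1))) \<le> 2 * norm (exp_quot w - 1)"
    using close assms(4) by (intro norm_Ln_le) auto
  then show ?thesis
    using close log_exp_quot_eq_Ln[OF assms(1)] by simp
qed

lemma deriv_bounded_on_compact:
  assumes "f holomorphic_on S" "open S" "compact K" "K \<subseteq> S"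
  shows "\<exists>B. \<forall>x\<in>K. norm (deriv f x) \<le> B"
proof -
  have "continuous_on K (deriv f)"
    using assms by (intro holomorphic_on_imp_continuous_on holomorphic_on_subset[OF holomorphic_deriv])
  then have "bounded (deriv f ` K)"
    using assms(3) by (intro compact_imp_bounded compact_continuous_image)
  then show ?thesis by (auto simp: bounded_iff)
qed

lemma Taylor_step_bound:
  fixes F f f' :: "complex \<Rightarrow> complex"
  assumes "convex S" "w \<in> S" "w + z \<in> S"
    and "\<And>x. x \<in> S \<Longrightarrow> (F has_field_derivative f x) (at x within S)"
    and "\<And>x. x \<in> S \<Longrightarrow> (f has_field_derivative f' x) (at x within S)"
    and "\<And>x. x \<in> S \<Longrightarrow> norm (f' x) \<le> B"
  shows "norm (F (w + z) - F w - z * f w) \<le> B * (norm z)\<^sup>2"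
proof -
  define g where "g = (\<lambda>i::nat. if i = 0 then F else if i = 1 then f else f')"
  have "norm (g 0 (w + z) - (\<Sum>i\<le>1. g i w * (w + z - w) ^ i / fact i))
          \<le> B * norm (w + z - w) ^ Suc 1 / fact 1"
  proof (rule complex_Taylor[OF assms(1)])
    fix i :: nat and x assume "x \<in> S" "i \<le> 1"
    then show "(g i has_field_derivative g (Suc i) x) (at x within S)"
      using assms(4,5) by (cases i) (auto simp: g_def)
  qed (use assms in \<open>auto simp: g_def\<close>)
  then show ?thesis
    by (simp add: g_def algebra_simps power2_eq_square)
qed

lemma sum_Taylor_steps_bound:
  fixes F f f' :: "complex \<Rightarrow> complex"
  assumes S: "convex S" "w \<in> S" "w + of_nat N * z \<in> S"
    and F: "\<And>x. x \<in> S \<Longrightarrow> (F has_field_derivative f x) (at x within S)"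
    and f: "\<And>x. x \<in> S \<Longrightarrow> (f has_field_derivative f' x) (at x within S)"
    and B: "\<And>x. x \<in> S \<Longrightarrow> norm (f' x) \<le> B"
  shows "norm (z * (\<Sum>m<N. f (w + of_nat m * z)) - (F (w + of_nat N * z) - F w))
           \<le> real N * B * (norm z)\<^sup>2"
proof -
  define p where "p m = w + of_nat m * z" for m
  have p_in_S: "p m \<in> S" if "m \<le> N" for m
  proof (cases "N = 0")
    case False
    define u where "u = real m / real N"
    have "u \<in> {0..1}" using that False by (auto simp: u_def)
    moreover have "p m = (1 - u) *\<^sub>R w + u *\<^sub>R (w + of_nat N * z)"
      using False by (simp add: p_def u_def scaleR_conv_of_real algebra_simps)
    ultimately show ?thesis using S unfolding convex_alt by auto
  qed (use that S in \<open>auto simp: p_def\<close>)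
  have step: "norm (F (p (Suc m)) - F (p m) - z * f (p m)) \<le> B * (norm z)\<^sup>2" if "m < N" for m
  proof -
    have "p (Suc m) = p m + z" by (simp add: p_def algebra_simps)
    then show ?thesis
      using Taylor_step_bound[OF S(1) p_in_S _ F f B, of m z] p_in_S[of "Suc m"] that by simp
  qed
  have "(\<Sum>m<N. F (p (Suc m)) - F (p m)) = F (p N) - F (p 0)"
    by (rule sum_lessThan_telescope)
  then have "z * (\<Sum>m<N. f (p m)) - (F (p N) - F (p 0))
               = - (\<Sum>m<N. F (p (Suc m)) - F (p m) - z * f (p m))"
    by (simp only: sum_subtractf sum_distrib_left) simp
  then have "norm (z * (\<Sum>m<N. f (p m)) - (F (p N) - F (p 0)))
               \<le> (\<Sum>m<N. norm (F (p (Suc m)) - F (p m) - z * f (p m)))"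
    by (simp only: norm_minus_cancel norm_sum)
  also have "\<dots> \<le> (\<Sum>m<N. B * (norm z)\<^sup>2)" by (intro sum_mono step) simp
  finally show ?thesis by (simp add: p_def)
qed

lemma norm_one_minus_exp_minus_ge:
  assumes "c \<le> Re x"
  shows "1 - exp (- c) \<le> norm (1 - exp (- x))"
proof -
  have "1 - exp (- c) \<le> 1 - norm (exp (- x))" using assms by simp
  also have "\<dots> \<le> norm (1 - exp (- x))" using norm_triangle_ineq2[of 1 "exp (- x)"] by simp
  finally show ?thesis .
qed

lemma norm_E_times_le:
  assumes "0 < c" "c \<le> Re x"
  shows "norm (E_times x) \<le> exp (- Re x) / (1 - exp (- c))"
proof -
  have "0 < 1 - exp (- c)" using assms by simp
  then show ?thesis
    using norm_one_minus_exp_minus_ge[OF assms(2)]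
    by (auto simp: E_times_def norm_divide intro!: divide_left_mono mult_pos_pos)
qed

lemma norm_deriv_E_times_le:
  assumes "0 < c" "c \<le> Re x"
  shows "norm (- exp (- x) / (1 - exp (- x))\<^sup>2) \<le> exp (- Re x) / (1 - exp (- c))\<^sup>2"
proof -
  have "0 < 1 - exp (- c)" using assms by simp
  then show ?thesis
    using norm_one_minus_exp_minus_ge[OF assms(2)]
    by (auto simp: norm_divide norm_power intro!: divide_left_mono power_mono mult_pos_pos)
qed

lemma exp_minus_Re_progression_le:
  assumes "Re w \<ge> 0" "Re z \<ge> 0"
  shows "exp (- Re (w + of_nat j * z)) \<le> exp (- Re z) ^ j"
  using assms by (simp add: exp_of_nat_mult[symmetric] mult_nonneg_nonneg)

lemma summable_E_times_progression:
  assumes "Re w > 0" "Re z > 0"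
  shows "summable (\<lambda>j. E_times (w + of_nat j * z))"
proof (rule summable_comparison_test')
  show "summable (\<lambda>j. exp (- Re z) ^ j / (1 - exp (- Re w)))"
    using assms by (intro summable_divide summable_geometric) simp
  fix j
  have "norm (E_times (w + of_nat j * z)) \<le> exp (- Re (w + of_nat j * z)) / (1 - exp (- Re w))"
    using assms by (intro norm_E_times_le) auto
  also have "\<dots> \<le> exp (- Re z) ^ j / (1 - exp (- Re w))"
    using assms exp_minus_Re_progression_le[of w z j] by (intro divide_right_mono) auto
  finally show "norm (E_times (w + of_nat j * z)) \<le> exp (- Re z) ^ j / (1 - exp (- Re w))" .
qed

lemma norm_suminf_le_geometric:
  fixes e :: "nat \<Rightarrow> 'a :: banach"
  assumes "\<And>j. norm (e j) \<le> K * r ^ j" "0 \<le> r" "r < 1"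
  shows "summable (\<lambda>j. norm (e j))" "norm (\<Sum>j. e j) \<le> K / (1 - r)"
proof -
  have summable_K: "summable (\<lambda>j. K * r ^ j)"
    using assms by (intro summable_mult summable_geometric) auto
  show summable_e: "summable (\<lambda>j. norm (e j))"
    by (rule summable_comparison_test'[OF summable_K]) (use assms in auto)
  have "norm (\<Sum>j. e j) \<le> (\<Sum>j. norm (e j))"
    by (rule summable_norm[OF summable_e])
  also have "\<dots> \<le> (\<Sum>j. K * r ^ j)"
    by (rule suminf_le[OF _ summable_e summable_K]) (use assms in auto)
  also have "\<dots> = K / (1 - r)"
    using assms by (simp add: suminf_mult suminf_geometric)
  finally show "norm (\<Sum>j. e j) \<le> K / (1 - r)" .
qed

lemma Ln_one_minus_exp_Taylor_step:
  assumes "0 < c" "c \<le> Re w" "Re z \<ge> 0"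
  shows "norm (Ln (1 - exp (- (w + z))) - Ln (1 - exp (- w)) - z * E_times w)
           \<le> exp (- Re w) / (1 - exp (- c))\<^sup>2 * (norm z)\<^sup>2"
proof (rule Taylor_step_bound)
  define S where "S = {x. Re w \<le> Re x}"
  show "convex S" unfolding S_def by (rule convex_halfspace_Re_ge)
  show "w \<in> S" "w + z \<in> S" using assms by (auto simp: S_def)
next
  fix x assume "x \<in> {x. Re w \<le> Re x}"
  then have x: "c \<le> Re x" using assms by simp
  then have "Re x > 0" using assms by simp
  then show "((\<lambda>w. Ln (1 - exp (- w))) has_field_derivative E_times x) (at x within {x. Re w \<le> Re x})"
    and "(E_times has_field_derivative - exp (- x) / (1 - exp (- x))\<^sup>2) (at x within {x. Re w \<le> Re x})"
    by (rule has_field_derivative_at_within[OF has_field_derivative_Ln_one_minus_exp]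
        has_field_derivative_at_within[OF has_field_derivative_E_times])+
  have "norm (- exp (- x) / (1 - exp (- x))\<^sup>2) \<le> exp (- Re x) / (1 - exp (- c))\<^sup>2"
    using assms x by (intro norm_deriv_E_times_le)
  also have "\<dots> \<le> exp (- Re w) / (1 - exp (- c))\<^sup>2"
    using \<open>x \<in> _\<close> by (intro divide_right_mono) auto
  finally show "norm (- exp (- x) / (1 - exp (- x))\<^sup>2) \<le> exp (- Re w) / (1 - exp (- c))\<^sup>2" .
qed

lemma tail_sum_E_times_estimate:
  assumes z: "Re z > 0" and c: "0 < c" "c \<le> Re w"
  shows "norm (z * (\<Sum>j. E_times (w + of_nat j * z)) + Ln (1 - exp (- w)))
           \<le> (norm z)\<^sup>2 / (1 - exp (- c))\<^sup>2 / (1 - exp (- Re z))"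
proof -
  define G where "G w = Ln (1 - exp (- w))" for w
  define p where "p j = w + of_nat j * z" for j
  define r where "r = exp (- Re z)"
  define K where "K = (norm z)\<^sup>2 / (1 - exp (- c))\<^sup>2"
  define e where "e j = G (p (Suc j)) - G (p j) - z * E_times (p j)" for j
  have r: "0 < r" "r < 1" using z by (auto simp: r_def)
  have exp_p: "exp (- Re (p j)) \<le> r ^ j" for j
    unfolding p_def r_def using z c by (intro exp_minus_Re_progression_le) auto
  have e_bound: "norm (e j) \<le> K * r ^ j" for j
  proof -
    have "p (Suc j) = p j + z" by (simp add: p_def algebra_simps)
    then have "norm (e j) \<le> exp (- Re (p j)) / (1 - exp (- c))\<^sup>2 * (norm z)\<^sup>2"
      unfolding e_def G_def using z c
      by (simp only:) (rule Ln_one_minus_exp_Taylor_step, auto simp: p_def add_increasing2)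
    also have "\<dots> \<le> K * r ^ j"
      using exp_p[of j] by (simp add: K_def divide_right_mono mult_right_mono field_simps)
    finally show ?thesis .
  qed
  obtain summable_e: "summable (\<lambda>j. norm (e j))" and sum_e_bound: "norm (\<Sum>j. e j) \<le> K / (1 - r)"
    using norm_suminf_le_geometric[OF e_bound] r by auto
  have "(\<lambda>j. exp (- p j)) \<longlonglongrightarrow> 0"
  proof (rule Lim_null_comparison)
    show "\<forall>\<^sub>F j in sequentially. norm (exp (- p j)) \<le> r ^ j" using exp_p by simp
    show "(\<lambda>j. r ^ j) \<longlonglongrightarrow> 0" using r by (intro LIMSEQ_power_zero) auto
  qed
  then have "(\<lambda>j. G (p j)) \<longlonglongrightarrow> Ln (1 - 0)"
    unfolding G_def by (intro tendsto_intros) auto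
  then have "(\<lambda>j. G (p (Suc j)) - G (p j)) sums (0 - G (p 0))"
    by (intro telescope_sums) simp
  then have "(\<lambda>j. (G (p (Suc j)) - G (p j)) - e j) sums (- G w - (\<Sum>j. e j))"
    using summable_norm_cancel[OF summable_e] by (intro sums_diff) (auto simp: p_def)
  then have "(\<lambda>j. z * E_times (p j)) sums (- G w - (\<Sum>j. e j))"
    by (simp add: e_def)
  then have "z * (\<Sum>j. E_times (p j)) + G w = - (\<Sum>j. e j)"
    using summable_E_times_progression[of w z] z c
    by (auto simp: sums_iff suminf_mult p_def)
  then show ?thesis
    using sum_e_bound by (simp add: G_def K_def r_def p_def)
qed

lemma head_sum_logderiv_estimate:
  assumes "Re w > 0" "Re z > 0" "norm w \<le> 2" "norm (w + of_nat N * z) \<le> 2"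
    and B: "\<forall>x\<in>cball 0 2. norm (deriv exp_quot_logderiv x) \<le> B"
  shows "norm (z * (\<Sum>m<N. exp_quot_logderiv (w + of_nat m * z))
                 - (log_exp_quot (w + of_nat N * z) - log_exp_quot w))
           \<le> real N * B * (norm z)\<^sup>2"
proof -
  define S where "S = {x. Re x > 0} \<inter> cball (0::complex) 2"
  have S: "Re x > 0" "x \<in> ball 0 (2 * pi)" "norm (deriv exp_quot_logderiv x) \<le> B" if "x \<in> S" for x
    using that pi_gt3 B by (auto simp: S_def)
  show ?thesis
  proof (rule sum_Taylor_steps_bound[of S])
    show "convex S" unfolding S_def by (intro convex_Int convex_halfspace_Re_gt convex_cball)
    show "w \<in> S" "w + of_nat N * z \<in> S"
      using assms by (auto simp: S_def add_pos_nonneg)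
  next
    fix x assume "x \<in> S"
    show "(log_exp_quot has_field_derivative exp_quot_logderiv x) (at x within S)"
      using has_field_derivative_log_exp_quot[OF S(1)[OF \<open>x \<in> S\<close>]]
      by (rule has_field_derivative_at_within)
    show "(exp_quot_logderiv has_field_derivative deriv exp_quot_logderiv x) (at x within S)"
      using holomorphic_derivI[OF exp_quot_logderiv_holomorphic open_ball S(2)[OF \<open>x \<in> S\<close>]]
      by (rule has_field_derivative_at_within)
  qed (rule S(3))
qed

lemma Digamma_real_le_ln:
  fixes x :: real
  assumes "x > 0"
  shows "Digamma x \<le> ln x"
proof (rule LIMSEQ_le_const2)
  show "(\<lambda>m. ln (real m) - (\<Sum>n<m. inverse (x + of_nat n))) \<longlonglongrightarrow> Digamma x"
    using Digamma_LIMSEQ[of x] assms by simp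
  have step: "ln (y + 1) - ln y \<le> inverse y" if "y > 0" for y :: real
    using ln_add_one_self_le_self[of "inverse y"] that by (simp add: ln_div field_simps)
  have "ln (x + real m) - ln x \<le> (\<Sum>n<m. inverse (x + of_nat n))" for m
  proof -
    have "ln (x + real m) - ln x = (\<Sum>n<m. ln (x + real n + 1) - ln (x + real n))"
      using sum_lessThan_telescope[of "\<lambda>n. ln (x + real n)" m] by (simp add: ac_simps)
    also have "\<dots> \<le> (\<Sum>n<m. inverse (x + of_nat n))"
      using assms by (intro sum_mono step) auto
    finally show ?thesis .
  qed
  moreover have "ln (real m) \<le> ln (x + real m)" if "m \<ge> 1" for m
    using that assms by simp
  ultimately show "\<exists>N. \<forall>m\<ge>N. ln (real m) - (\<Sum>n<m. inverse (x + of_nat n)) \<le> ln x"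
    by (intro exI[of _ 1]) (smt (verit))
qed

lemma ln_minus_one_le_Digamma_real:
  fixes x :: real
  assumes "x > 1"
  shows "ln (x - 1) \<le> Digamma x"
proof (rule LIMSEQ_le)
  show "(\<lambda>m. ln (real m) - (\<Sum>n<m. inverse (x + of_nat n))) \<longlonglongrightarrow> Digamma x"
    using Digamma_LIMSEQ[of x] assms by simp
  have "(\<lambda>m. ln (real m) - ln (x - 1 + real m)) \<longlonglongrightarrow> 0"
    using assms by real_asymp
  then show "(\<lambda>m. ln (real m) - ln (x - 1 + real m) + ln (x - 1)) \<longlonglongrightarrow> ln (x - 1)"
    using tendsto_add[OF _ tendsto_const, of _ 0 _ "ln (x - 1)"] by simp
  have step: "inverse y \<le> ln y - ln (y - 1)" if "y > 1" for y :: real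
    using ln_le_minus_one[of "(y - 1) / y"] that by (simp add: ln_div field_simps)
  have "(\<Sum>n<m. inverse (x + of_nat n)) \<le> ln (x - 1 + real m) - ln (x - 1)" for m
  proof -
    have "(\<Sum>n<m. inverse (x + of_nat n)) \<le> (\<Sum>n<m. ln (x - 1 + real (Suc n)) - ln (x - 1 + real n))"
      using assms step by (intro sum_mono) (simp add: algebra_simps)
    also have "\<dots> = ln (x - 1 + real m) - ln (x - 1)"
      using sum_lessThan_telescope[of "\<lambda>n. ln (x - 1 + real n)" m] by simp
    finally show ?thesis .
  qed
  then show "\<exists>N. \<forall>m\<ge>N. ln (real m) - ln (x - 1 + real m) + ln (x - 1)
                          \<le> ln (real m) - (\<Sum>n<m. inverse (x + of_nat n))"
    by (intro exI[of _ 0]) (smt (verit))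
qed

lemma abs_Digamma_real_minus_ln_le:
  fixes x :: real
  assumes "x > 1"
  shows "\<bar>Digamma x - ln x\<bar> \<le> 1 / (x - 1)"
proof -
  have "ln x - ln (x - 1) \<le> 1 / (x - 1)"
    using ln_le_minus_one[of "x / (x - 1)"] assms by (simp add: ln_div field_simps)
  then show ?thesis
    using Digamma_real_le_ln[of x] ln_minus_one_le_Digamma_real[OF assms] assms by simp
qed

lemma Digamma_plus_of_nat:
  fixes z :: "'a :: {real_normed_field,banach}"
  assumes "z \<notin> \<int>\<^sub>\<le>\<^sub>0"
  shows "Digamma (z + of_nat N) = Digamma z + (\<Sum>m<N. 1 / (of_nat m + z))"
proof (induction N)
  case (Suc N)
  have "z + of_nat N \<noteq> 0"
  proof
    assume "z + of_nat N = 0"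
    then have "z = - of_nat N" by (simp add: add_eq_0_iff)
    with assms show False by simp
  qed
  then have "Digamma (z + of_nat (Suc N)) = Digamma (z + of_nat N) + 1 / (z + of_nat N)"
    using Digamma_plus1[of "z + of_nat N"] by (simp add: ac_simps)
  with Suc show ?case by (simp add: add.commute)
qed simp

lemma sum_inverse_shift_eq_Digamma:
  fixes a :: real
  assumes "a > 0"
  shows "(\<Sum>m<N. 1 / (of_nat m + complex_of_real a))
           = complex_of_real (Digamma (real N + a)) - Digamma (complex_of_real a)"
proof -
  have "complex_of_real a \<notin> \<int>\<^sub>\<le>\<^sub>0"
    using assms by (auto simp: of_real_in_nonpos_Ints_iff)
  then have "Digamma (complex_of_real a + of_nat N)
               = Digamma (complex_of_real a) + (\<Sum>m<N. 1 / (of_nat m + complex_of_real a))"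
    by (rule Digamma_plus_of_nat)
  moreover have "Digamma (complex_of_real a + of_nat N) = complex_of_real (Digamma (real N + a))"
    using assms Polygamma_of_real[of "real N + a" 0] by (simp add: add.commute)
  ultimately show ?thesis by simp
qed

lemma E_times_sum_decomposition:
  fixes z :: complex and a :: real and N :: nat
  assumes z: "Re z > 0" and a: "a > 0"
  defines "w \<equiv> complex_of_real a * z" and "v \<equiv> complex_of_real a * z + of_nat N * z"
  shows "z * ((\<Sum>m. E_times ((of_nat m + complex_of_real a) * z))
              - (- Ln z / z - Digamma (complex_of_real a) / z))
         = (z * (\<Sum>j. E_times (v + of_nat j * z)) + Ln (1 - exp (- v)))
           + (z * (\<Sum>m<N. exp_quot_logderiv (w + of_nat m * z)) - (log_exp_quot v - log_exp_quot w))
           - log_exp_quot w + complex_of_real (Digamma (real N + a) - ln (real N + a))"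
proof -
  define tail where "tail = (\<Sum>j. E_times (v + of_nat j * z))"
  define head where "head = (\<Sum>m<N. exp_quot_logderiv (w + of_nat m * z))"
  define harmonic where "harmonic = (\<Sum>m<N. 1 / (of_nat m + complex_of_real a))"
  have Re_w: "Re (w + of_nat m * z) > 0" for m
    using z a by (simp add: w_def add_pos_nonneg)
  have terms: "(of_nat m + complex_of_real a) * z = w + of_nat m * z" for m
    by (simp add: w_def algebra_simps)
  have "(\<Sum>m. E_times (w + of_nat m * z))
          = (\<Sum>j. E_times (w + of_nat (j + N) * z)) + (\<Sum>m<N. E_times (w + of_nat m * z))"
    using Re_w[of 0] z by (intro suminf_split_initial_segment summable_E_times_progression) auto
  also have "(\<Sum>j. E_times (w + of_nat (j + N) * z)) = tail"
    by (simp add: tail_def v_def w_def algebra_simps)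
  also have "(\<Sum>m<N. E_times (w + of_nat m * z)) = (\<Sum>m<N. 1 / (w + of_nat m * z)) + head"
    using Re_w by (simp add: head_def E_times_eq_inverse_plus_logderiv sum.distrib)
  also have "(\<Sum>m<N. 1 / (w + of_nat m * z)) = harmonic / z"
    by (simp add: harmonic_def sum_divide_distrib flip: terms)
  finally have sum_eq: "(\<Sum>m. E_times ((of_nat m + complex_of_real a) * z)) = tail + harmonic / z + head"
    by (simp only: terms add.assoc)
  have harmonic_eq: "harmonic = complex_of_real (Digamma (real N + a)) - Digamma (complex_of_real a)"
    unfolding harmonic_def using a by (rule sum_inverse_shift_eq_Digamma)
  have log_v_eq: "log_exp_quot v = Ln (1 - exp (- v)) - (complex_of_real (ln (real N + a)) + Ln z)"
  proof -
    have "v = complex_of_real (real N + a) * z" by (simp add: v_def algebra_simps)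
    then have "Ln v = complex_of_real (ln (real N + a)) + Ln z"
      using z a by (simp only:) (subst Ln_times_of_real, auto simp: Ln_of_real simp del: of_real_add)
    then show ?thesis by (simp add: log_exp_quot_def)
  qed
  show ?thesis
    using z unfolding sum_eq harmonic_eq log_v_eq tail_def[symmetric] head_def[symmetric]
    by (auto simp: field_simps)
qed

lemma one_minus_exp_minus_ge_half:
  fixes x :: real
  assumes "0 \<le> x" "x \<le> 1"
  shows "x / 2 \<le> 1 - exp (- x)"
proof -
  have "exp (- x) \<le> 1 / (1 + x)"
    using exp_ge_add_one_self[of x] assms by (simp add: exp_minus field_simps)
  moreover have "x / 2 \<le> 1 - 1 / (1 + x)"
    using assms mult_left_le_one_le[of x x] by (simp add: field_simps)
  ultimately show ?thesis by linarith
qed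

lemma norm_le_sector_D: "z \<in> sector_D \<Delta> \<Longrightarrow> norm z \<le> (1 + \<Delta>) * Re z"
  using cmod_le[of z] by (auto simp: sector_D_def algebra_simps)

lemma obtain_nat_mult_near_one:
  fixes x :: real
  assumes "0 < x" "x \<le> 1/2"
  obtains N :: nat where "2 \<le> N" "1 \<le> real N * x" "real N * x \<le> 3/2"
proof
  define N where "N = nat \<lceil>1 / x\<rceil>"
  have N: "1 / x \<le> real N" "real N < 1 / x + 1"
    using assms by (auto simp: N_def) linarith
  then show "1 \<le> real N * x" "real N * x \<le> 3/2"
    using assms by (auto simp: field_simps)
  have "2 \<le> 1 / x" using assms by (simp add: field_simps)
  with N show "2 \<le> N" by linarith
qed

context
  fixes \<Delta> a :: real and z :: complex and N :: nat
  assumes \<Delta>: "\<Delta> > 0" and a: "0 < a" "a \<le> 1"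
    and z: "z \<in> sector_D \<Delta>" "norm z \<le> 1/2"
    and N: "2 \<le> N" "1 \<le> real N * norm z" "real N * norm z \<le> 3/2"
begin

private lemma Re_z_pos: "Re z > 0"
  using z by (simp add: sector_D_def)

private lemma norm_start_le: "norm (complex_of_real a * z) \<le> norm z"
  using a by (simp add: norm_mult mult_left_le_one_le)

private lemma norm_split_point_le: "norm (complex_of_real a * z + of_nat N * z) \<le> 2"
proof -
  have "complex_of_real a * z + of_nat N * z = complex_of_real (real N + a) * z"
    by (simp add: algebra_simps)
  then have "norm (complex_of_real a * z + of_nat N * z) = \<bar>real N + a\<bar> * norm z"
    by (simp only: norm_mult norm_of_real)
  also have "\<dots> = real N * norm z + a * norm z" using a by (simp add: algebra_simps)
  finally show ?thesis using N a z(2) mult_left_le_one_le[of "norm z" a] by simp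
qed

lemma tail_bound_at_scale:
  defines "v \<equiv> complex_of_real a * z + of_nat N * z"
  shows "norm (z * (\<Sum>j. E_times (v + of_nat j * z)) + Ln (1 - exp (- v)))
           \<le> 2 * (1 + \<Delta>) / (1 - exp (- (1 / (1 + \<Delta>))))\<^sup>2 * norm z"
proof -
  define \<kappa> where "\<kappa> = 1 - exp (- (1 / (1 + \<Delta>)))"
  have \<kappa>: "\<kappa> > 0" using \<Delta> by (simp add: \<kappa>_def)
  have z_sector: "norm z \<le> (1 + \<Delta>) * Re z" using norm_le_sector_D[OF z(1)] .
  have "1 / (1 + \<Delta>) \<le> real N * Re z"
    using N(2) \<Delta> mult_left_mono[OF z_sector, of "real N"] by (simp add: field_simps)
  also have "\<dots> \<le> Re v" using a Re_z_pos by (simp add: v_def)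
  finally have "norm (z * (\<Sum>j. E_times (v + of_nat j * z)) + Ln (1 - exp (- v)))
                  \<le> (norm z)\<^sup>2 / \<kappa>\<^sup>2 / (1 - exp (- Re z))"
    unfolding \<kappa>_def using Re_z_pos \<Delta> by (intro tail_sum_E_times_estimate) auto
  also have "\<dots> \<le> (norm z)\<^sup>2 / \<kappa>\<^sup>2 / (Re z / 2)"
    using Re_z_pos z(2) complex_Re_le_cmod[of z] \<kappa>
    by (intro divide_left_mono one_minus_exp_minus_ge_half) auto
  also have "\<dots> = 2 / \<kappa>\<^sup>2 * norm z * (norm z / Re z)"
    using Re_z_pos by (simp add: field_simps power2_eq_square)
  also have "\<dots> \<le> 2 / \<kappa>\<^sup>2 * norm z * (1 + \<Delta>)"
    using Re_z_pos z_sector by (intro mult_left_mono) (auto simp: field_simps)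
  finally show ?thesis by (simp add: \<kappa>_def field_simps)
qed

lemma head_bound_at_scale:
  assumes B: "\<forall>x\<in>cball 0 2. norm (deriv exp_quot_logderiv x) \<le> B"
  defines "w \<equiv> complex_of_real a * z" and "v \<equiv> complex_of_real a * z + of_nat N * z"
  shows "norm (z * (\<Sum>m<N. exp_quot_logderiv (w + of_nat m * z)) - (log_exp_quot v - log_exp_quot w))
           \<le> 2 * B * norm z"
proof -
  have "0 \<le> B" using B by (meson centre_in_cball norm_ge_zero order_trans zero_le_numeral)
  have "norm (z * (\<Sum>m<N. exp_quot_logderiv (w + of_nat m * z)) - (log_exp_quot v - log_exp_quot w))
          \<le> real N * B * (norm z)\<^sup>2"
    using head_sum_logderiv_estimate[OF _ Re_z_pos _ _ B, of w N] Re_z_pos a z(2)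
      norm_start_le norm_split_point_le
    by (simp add: w_def v_def)
  also have "\<dots> = (real N * norm z) * B * norm z" by (simp add: power2_eq_square)
  also have "\<dots> \<le> 2 * B * norm z"
    using N(3) \<open>0 \<le> B\<close> by (intro mult_right_mono) auto
  finally show ?thesis .
qed

lemma initial_bound_at_scale:
  assumes M: "\<forall>v\<in>cball 0 2. norm (deriv exp_quot v) \<le> M" and small: "M * norm z < 1/2"
  shows "norm (log_exp_quot (complex_of_real a * z)) \<le> 2 * M * norm z"
proof -
  have "0 \<le> M" using M by (meson centre_in_cball norm_ge_zero order_trans zero_le_numeral)
  with norm_start_le have "M * norm (complex_of_real a * z) \<le> M * norm z"
    by (rule mult_left_mono)
  then have "norm (log_exp_quot (complex_of_real a * z)) \<le> 2 * M * norm (complex_of_real a * z)"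
    using Re_z_pos a z(2) norm_start_le M small
    by (intro norm_log_exp_quot_le[of _ 2]) auto
  also have "\<dots> \<le> 2 * M * norm z" using norm_start_le \<open>0 \<le> M\<close> by (simp add: mult_left_mono)
  finally show ?thesis .
qed

lemma Digamma_bound_at_scale:
  "norm (complex_of_real (Digamma (real N + a) - ln (real N + a))) \<le> 2 * norm z"
proof -
  have "\<bar>Digamma (real N + a) - ln (real N + a)\<bar> \<le> 1 / (real N + a - 1)"
    using N a by (intro abs_Digamma_real_minus_ln_le) auto
  also have "\<dots> \<le> 2 / real N" using N a by (simp add: field_simps)
  also have "\<dots> \<le> 2 * norm z" using N by (simp add: field_simps)
  finally show ?thesis by (simp only: norm_of_real)
qed

lemma E_times_sum_remainder_bound:
  assumes M: "\<forall>v\<in>cball 0 2. norm (deriv exp_quot v) \<le> M" and "M * norm z < 1/2"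
    and B: "\<forall>v\<in>cball 0 2. norm (deriv exp_quot_logderiv v) \<le> B"
  shows "norm ((\<Sum>m. E_times ((of_nat m + complex_of_real a) * z))
                - (- Ln z / z - Digamma (complex_of_real a) / z))
           \<le> 2 * (1 + \<Delta>) / (1 - exp (- (1 / (1 + \<Delta>))))\<^sup>2 + 2 * B + 2 * M + 2"
    (is "norm ?R \<le> ?K")
proof -
  have "norm z * norm ?R
          \<le> 2 * (1 + \<Delta>) / (1 - exp (- (1 / (1 + \<Delta>))))\<^sup>2 * norm z + 2 * B * norm z
             + 2 * M * norm z + 2 * norm z"
    unfolding norm_mult[symmetric] E_times_sum_decomposition[OF Re_z_pos a(1), of N]
    using tail_bound_at_scale head_bound_at_scale[OF B] initial_bound_at_scale[OF assms(1,2)]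
      Digamma_bound_at_scale
    by (smt (verit) norm_triangle_ineq norm_triangle_ineq4)
  also have "\<dots> = norm z * ?K" by (simp add: algebra_simps)
  finally show ?thesis
    by (rule mult_left_le_imp_le) (use Re_z_pos in auto)
qed

end

lemma E_times_sum_remainder_bounded_near_0:
  fixes \<Delta> a :: real
  assumes "\<Delta> > 0" and "0 < a" and "a \<le> 1"
  obtains K \<delta> :: real where "\<delta> > 0"
    "\<And>z. z \<in> sector_D \<Delta> \<Longrightarrow> norm z < \<delta> \<Longrightarrow>
       norm ((\<Sum>m. E_times ((of_nat m + complex_of_real a) * z))
             - (- Ln z / z - Digamma (complex_of_real a) / z)) \<le> K"
proof -
  obtain M where M: "\<forall>v\<in>cball 0 2. norm (deriv exp_quot v) \<le> M"
    using deriv_bounded_on_compact[OF exp_quot_holomorphic open_UNIV compact_cball] by blast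
  have "cball 0 2 \<subseteq> ball (0::complex) (2 * pi)" using pi_gt3 by (simp add: cball_subset_ball_iff)
  then obtain B where B: "\<forall>v\<in>cball 0 2. norm (deriv exp_quot_logderiv v) \<le> B"
    using deriv_bounded_on_compact[OF exp_quot_logderiv_holomorphic open_ball compact_cball] by blast
  define \<delta> where "\<delta> = 1 / (2 * (\<bar>M\<bar> + 1))"
  have "\<delta> > 0" by (simp add: \<delta>_def add_pos_nonneg)
  moreover have "norm ((\<Sum>m. E_times ((of_nat m + complex_of_real a) * z))
                       - (- Ln z / z - Digamma (complex_of_real a) / z))
                   \<le> 2 * (1 + \<Delta>) / (1 - exp (- (1 / (1 + \<Delta>))))\<^sup>2 + 2 * B + 2 * M + 2"
    if z: "z \<in> sector_D \<Delta>" "norm z < \<delta>" for z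
  proof -
    have "M * norm z \<le> \<bar>M\<bar> * \<delta>"
      using z(2) by (intro mult_mono) auto
    also have "\<dots> < 1/2" by (simp add: \<delta>_def field_simps)
    finally have small: "M * norm z < 1/2" .
    have "\<delta> \<le> 1/2" by (simp add: \<delta>_def field_simps)
    then have "norm z \<le> 1/2" using z(2) by simp
    have "norm z > 0" using z by (auto simp: sector_D_def)
    then obtain N where "2 \<le> N" "1 \<le> real N * norm z" "real N * norm z \<le> 3/2"
      using obtain_nat_mult_near_one \<open>norm z \<le> 1/2\<close> by blast
    with \<open>norm z \<le> 1/2\<close> show ?thesis
      using E_times_sum_remainder_bound[OF assms z(1) _ _ _ _ M small B] by simp
  qed
  ultimately show ?thesis by (rule that)
qed

theorem lemma3p5:
  fixes \<Delta> a :: real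
  assumes "\<Delta> > 0" and "0 < a" and "a \<le> 1"
  shows "(\<lambda>z. (\<Sum>m. E_times ((of_nat m + complex_of_real a) * z))
              - (- Ln z / z - Digamma (complex_of_real a) / z))
           \<in> O[at 0 within sector_D \<Delta>](\<lambda>_. 1)"
proof -
  obtain K \<delta> where "\<delta> > 0"
    "\<And>z. z \<in> sector_D \<Delta> \<Longrightarrow> norm z < \<delta> \<Longrightarrow>
      norm ((\<Sum>m. E_times ((of_nat m + complex_of_real a) * z))
            - (- Ln z / z - Digamma (complex_of_real a) / z)) \<le> K"
    using E_times_sum_remainder_bounded_near_0[OF assms] by blast
  then show ?thesis
    by (intro bigoI[of _ K]) (auto simp: eventually_at dist_norm)
qed

end
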